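(* Let $T>0$, $0<\eta<T$, $\alpha >\frac{2T}{\eta ^{2}}$ and $\beta\geq0$. If $y\in C([0,T],[0,\infty))$, then the problem \[ u''(t)+y(t)=0,\ t\in(0,T),\qquad u(0)=\beta u(\eta),\quad u(T)=\alpha\int_0^\eta u(s)\,ds \] has no positive solutions.
   Context: A solution is a function $u\in C^2([0,T])$ satisfying the differential equation on $(0,T)$ and the two boundary conditions; a positive solution is a solution $u$ with $u(t)>0$ for $0<t<T$. *)

theory Defs
  imports "HOL-Analysis.Analysis"
begin

definition C2_with :: "real \<Rightarrow> real \<Rightarrow> (real \<Rightarrow> real) \<Rightarrow> (real \<Rightarrow> real) \<Rightarrow> (real \<Rightarrow> real) \<Rightarrow> bool" where
  "C2_with a b u u' u'' \<longleftrightarrow>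
     (\<forall>t\<in>{a..b}. (u has_real_derivative u' t) (at t within {a..b})) \<and>
     (\<forall>t\<in>{a..b}. (u' has_real_derivative u'' t) (at t within {a..b})) \<and>
     continuous_on {a..b} u''"

definition bvp_solution :: "real \<Rightarrow> real \<Rightarrow> real \<Rightarrow> real \<Rightarrow> (real \<Rightarrow> real) \<Rightarrow> (real \<Rightarrow> real) \<Rightarrow> bool" where
  "bvp_solution T \<eta> \<alpha> \<beta> y u \<longleftrightarrow>
     (\<exists>u' u''. C2_with 0 T u u' u'' \<and> (\<forall>t\<in>{0<..<T}. u'' t + y t = 0)) \<and>
     u 0 = \<beta> * u \<eta> \<and>
     u T = \<alpha> * integral {0..\<eta>} u"

definition positive_bvp_solution :: "real \<Rightarrow> real \<Rightarrow> real \<Rightarrow> real \<Rightarrow> (real \<Rightarrow> real) \<Rightarrow> (real \<Rightarrow> real) \<Rightarrow> bool" where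
  "positive_bvp_solution T \<eta> \<alpha> \<beta> y u \<longleftrightarrow>
     bvp_solution T \<eta> \<alpha> \<beta> y u \<and> (\<forall>t\<in>{0<..<T}. u t > 0)"

end

theory Submission
  imports Defs
begin

text \<open>A solution \<open>u\<close> is concave, since \<open>u'' = -y \<le> 0\<close>, and \<open>u(0) = \<beta> u(\<eta>) \<ge> 0\<close>;
  hence \<open>u(s) \<ge> s u(q) / q\<close> on \<open>[0,q]\<close>. Integrating over \<open>[0,\<eta>]\<close> with \<open>q = \<eta>\<close> shows
  \<open>\<integral>\<^sub>0\<^sup>\<eta> u > 0\<close>, so \<open>u(T) > 0\<close>, and with \<open>q = T\<close> gives
  \<open>u(T) = \<alpha> \<integral>\<^sub>0\<^sup>\<eta> u \<ge> \<alpha> \<eta>\<^sup>2 / (2T) \<cdot> u(T) > u(T)\<close>.\<close>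

lemma concave_on_Icc_if_concave_on_interior:
  fixes f :: "real \<Rightarrow> real"
  assumes cont: "continuous_on {a..b} f" and conc: "concave_on {a<..<b} f"
  shows "concave_on {a..b} f"
proof (rule concave_on_linorderI)
  \<comment> \<open>Shrink the chord \<open>[x,y]\<close> to \<open>[x+e, y-e] \<subseteq> (a,b)\<close> and let \<open>e \<rightarrow> 0\<close>.\<close>
  fix t x y :: real
  assume t: "0 < t" "t < 1" and xy: "x \<in> {a..b}" "y \<in> {a..b}" "x < y"
  define d where "d = (y - x) / 2"
  define g where "g = (\<lambda>e. f ((1 - t) *\<^sub>R (x + e) + t *\<^sub>R (y - e))
                             - ((1 - t) * f (x + e) + t * f (y - e)))"
  have d: "0 < d" using xy by (simp add: d_def)
  have in_ab: "x + e \<in> {a..b}" "y - e \<in> {a..b}" if "e \<in> {0..d}" for e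
    using that xy by (auto simp: d_def field_simps)
  have mix_in_ab: "(1 - t) *\<^sub>R (x + e) + t *\<^sub>R (y - e) \<in> {a..b}" if "e \<in> {0..d}" for e
    using in_ab[OF that] t convex_real_interval(5)[of a b] by (auto simp: convex_alt)
  have "continuous_on {0..d} g"
    unfolding g_def using in_ab mix_in_ab xy
    by (intro continuous_intros continuous_on_compose2[OF cont]) (auto simp: d_def field_simps)
  moreover have "g e \<ge> 0" if "e \<in> {0<..<d}" for e
  proof -
    have "x + e \<in> {a<..<b}" "y - e \<in> {a<..<b}" using that xy by (auto simp: d_def field_simps)
    then show ?thesis
      using concave_onD[OF conc, of t] t unfolding g_def by auto
  qed
  ultimately have "g 0 \<ge> 0"
    using continuous_ge_on_closure[of "{0<..<d}" g 0 0] d by auto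
  then show "f ((1 - t) *\<^sub>R x + t *\<^sub>R y) \<ge> (1 - t) * f x + t * f y"
    by (simp add: g_def)
qed (rule convex_real_interval)

lemma C2_with_imp_continuous_on:
  assumes "C2_with a b u u' u''"
  shows "continuous_on {a..b} u"
  using assms unfolding C2_with_def by (blast intro: DERIV_continuous_on)

lemma concave_on_Icc_if_C2_with:
  assumes "C2_with a b u u' u''" and "\<And>t. t \<in> {a<..<b} \<Longrightarrow> u'' t \<le> 0"
  shows "concave_on {a..b} u"
proof (rule concave_on_Icc_if_concave_on_interior)
  have D1: "\<And>t. t \<in> {a..b} \<Longrightarrow> (u has_real_derivative u' t) (at t within {a..b})"
    and D2: "\<And>t. t \<in> {a..b} \<Longrightarrow> (u' has_real_derivative u'' t) (at t within {a..b})"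
    using assms(1) unfolding C2_with_def by auto
  show "continuous_on {a..b} u"
    using assms(1) by (rule C2_with_imp_continuous_on)
  show "concave_on {a<..<b} u"
  proof (rule f''_le0_imp_concave)
    fix t assume "t \<in> {a<..<b}"
    then show "(u has_real_derivative u' t) (at t)" "(u' has_real_derivative u'' t) (at t)"
      "u'' t \<le> 0"
      using D1[of t] D2[of t] assms(2)[of t] at_within_Icc_at[of a t b] by auto
  qed simp
qed

lemma concave_on_chord_from_nonneg_origin:
  fixes f :: "real \<Rightarrow> real"
  assumes "concave_on {0..b} f" and "f 0 \<ge> 0" and "0 \<le> s" "s \<le> q" "q \<le> b"
  shows "s * f q \<le> q * f s"
proof (cases "q = 0")
  case False
  have "concave_on {0..q} f"
    using assms(1) convex_on_subset[of "{0..b}" "\<lambda>x. - f x" "{0..q}"] assms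
    by (simp add: concave_on_def)
  then have "f s \<ge> (f q - f 0) / q * s + f 0"
    using concave_onD_Icc'[of 0 q f s] assms by simp
  then have "q * f s \<ge> s * f q + (q - s) * f 0"
    using False assms by (simp add: field_simps)
  moreover have "(q - s) * f 0 \<ge> 0"
    using assms by simp
  ultimately show ?thesis
    by linarith
qed (use assms in simp)

lemma integral_ge_of_linear_minorant:
  fixes f :: "real \<Rightarrow> real"
  assumes "f integrable_on {0..h}" and "\<And>s. s \<in> {0..h} \<Longrightarrow> s * c \<le> f s" and "0 \<le> h"
  shows "h\<^sup>2 / 2 * c \<le> integral {0..h} f"
proof -
  have "((\<lambda>s. s * c) has_integral (h\<^sup>2 / 2 * c - 0\<^sup>2 / 2 * c)) {0..h}"
    using assms(3)
    by (intro fundamental_theorem_of_calculus)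
       (auto intro!: derivative_eq_intros simp: has_real_derivative_iff_has_vector_derivative[symmetric])
  then have "((\<lambda>s. s * c) has_integral (h\<^sup>2 / 2 * c)) {0..h}"
    by simp
  from has_integral_le[OF this integrable_integral[OF assms(1)]] assms(2)
  show ?thesis
    by blast
qed

lemma integral_ge_of_concave_on_nonneg_origin:
  fixes f :: "real \<Rightarrow> real"
  assumes "concave_on {0..b} f" and "continuous_on {0..b} f" and "f 0 \<ge> 0"
    and "0 \<le> h" "h \<le> q" "q \<le> b" "0 < q"
  shows "h\<^sup>2 / (2 * q) * f q \<le> integral {0..h} f"
proof -
  have "s * (f q / q) \<le> f s" if "s \<in> {0..h}" for s
    using concave_on_chord_from_nonneg_origin[OF assms(1,3), of s q] that assms(5-7)
    by (simp add: field_simps)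
  moreover have "f integrable_on {0..h}"
    using continuous_on_subset[OF assms(2), of "{0..h}"] assms(5,6)
    by (intro integrable_continuous_interval) simp
  ultimately have "h\<^sup>2 / 2 * (f q / q) \<le> integral {0..h} f"
    using assms(4) by (intro integral_ge_of_linear_minorant)
  then show ?thesis
    by simp
qed

theorem lemma2p3:
  fixes T \<eta> \<alpha> \<beta> :: real and y :: "real \<Rightarrow> real"
  assumes "T > 0" and "0 < \<eta>" and "\<eta> < T" and "\<alpha> > 2 * T / \<eta>\<^sup>2" and "\<beta> \<ge> 0"
    and "continuous_on {0..T} y" and "\<forall>t\<in>{0..T}. y t \<ge> 0"
  shows "\<not> (\<exists>u. positive_bvp_solution T \<eta> \<alpha> \<beta> y u)"
proof
  assume "\<exists>u. positive_bvp_solution T \<eta> \<alpha> \<beta> y u"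
  then obtain u u' u'' where C2: "C2_with 0 T u u' u''" and ode: "\<forall>t\<in>{0<..<T}. u'' t + y t = 0"
    and bc0: "u 0 = \<beta> * u \<eta>" and bcT: "u T = \<alpha> * integral {0..\<eta>} u"
    and pos: "\<forall>t\<in>{0<..<T}. u t > 0"
    unfolding positive_bvp_solution_def bvp_solution_def by blast
  have "u'' t \<le> 0" if "t \<in> {0<..<T}" for t
  proof -
    have "u'' t + y t = 0" and "y t \<ge> 0"
      using ode assms(7) that by auto
    then show ?thesis
      by linarith
  qed
  with C2 have concave: "concave_on {0..T} u"
    by (rule concave_on_Icc_if_C2_with)
  note integral_bound =
    integral_ge_of_concave_on_nonneg_origin[OF concave C2_with_imp_continuous_on[OF C2]]
  have u_eta: "u \<eta> > 0"
    using pos assms(2,3) by auto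
  with bc0 assms(5) have u_0: "u 0 \<ge> 0"
    by simp
  have "2 * T / \<eta>\<^sup>2 > 0"
    using assms(1,2) by simp
  with assms(4) have "\<alpha> > 0"
    by linarith
  moreover have "0 < \<eta>\<^sup>2 / (2 * \<eta>) * u \<eta>"
    using u_eta assms(2) by simp
  moreover have "\<dots> \<le> integral {0..\<eta>} u"
    using assms(2,3) by (intro integral_bound u_0) auto
  ultimately have u_T: "u T > 0"
    using bcT by simp
  have "\<eta>\<^sup>2 / (2 * T) * u T \<le> integral {0..\<eta>} u"
    using assms(1-3) by (intro integral_bound u_0) auto
  then have "\<alpha> * (\<eta>\<^sup>2 / (2 * T) * u T) \<le> \<alpha> * integral {0..\<eta>} u"
    by (rule mult_left_mono) (use \<open>\<alpha> > 0\<close> in linarith)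
  also have "\<dots> = u T"
    by (rule bcT[symmetric])
  finally have upper: "\<alpha> * (\<eta>\<^sup>2 / (2 * T) * u T) \<le> u T" .
  have "\<alpha> * (\<eta>\<^sup>2 / (2 * T)) > 1"
    using assms(1,2,4) by (simp add: field_simps)
  then have "u T < \<alpha> * (\<eta>\<^sup>2 / (2 * T)) * u T"
    using mult_strict_right_mono[OF _ u_T] by fastforce
  with upper show False
    by simp
qed

end
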